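(* Let $X$ be a finite set, $\mathcal{T}_X$ the full transformation semigroup on $X$, and $(\mathcal{T}_X,\leq)$ the ordered full transformation semigroup with the natural partial order. For $f,g\in\mathcal{T}_X$, $f\,\mathscr{R}\,g$ in the ordered semigroup $(\mathcal{T}_X,\leq)$ if and only if $f\,\mathscr{R}\,g$ in the semigroup $\mathcal{T}_X$.
   Context: $\mathcal{T}_X$ is the semigroup of all maps $X\to X$ under composition, with maps written on the right and composed left to right. The natural partial order: $f\leq g$ iff $f\mathcal{T}_X^1\subseteq g\mathcal{T}_X^1$ and $f=\alpha f=\alpha g$ for some $\alpha\in\mathcal{T}_X$; with it, $(\mathcal{T}_X,\leq)$ is a regular ordered semigroup. In an ordered semigroup $S$, $a\,\mathscr{R}\,b$ iff $(a\cup aS]=(b\cup bS]$, where $(A]=\{x: x\leq a\text{ for some }a\in A\}$. In the plain semigroup $\mathcal{T}_X$, $\mathscr{R}$ is the usual Green's relation ($f\,\mathscr{R}\,g$ iff $f\mathcal{T}_X^1=g\mathcal{T}_X^1$). *)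

theory Defs
  imports Main
begin

text \<open>Maps are written on the right and composed left to right:
  x(fg) = (xf)g, so the semigroup product fg is g \<circ> f.\<close>
definition tmul :: "('a \<Rightarrow> 'a) \<Rightarrow> ('a \<Rightarrow> 'a) \<Rightarrow> ('a \<Rightarrow> 'a)" where
  "tmul f g = g \<circ> f"

definition tright :: "('a \<Rightarrow> 'a) \<Rightarrow> ('a \<Rightarrow> 'a) set" where
  "tright f = insert f {tmul f h | h. True}"

definition tnat_le :: "('a \<Rightarrow> 'a) \<Rightarrow> ('a \<Rightarrow> 'a) \<Rightarrow> bool" where
  "tnat_le f g \<longleftrightarrow> tright f \<subseteq> tright g \<and>
     (\<exists>\<alpha>. f = tmul \<alpha> f \<and> tmul \<alpha> f = tmul \<alpha> g)"

definition down_cl :: "('s \<Rightarrow> 's \<Rightarrow> bool) \<Rightarrow> 's set \<Rightarrow> 's set" where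
  "down_cl le A = {x. \<exists>a\<in>A. le x a}"

definition ord_greenR :: "('s \<Rightarrow> 's \<Rightarrow> 's) \<Rightarrow> ('s \<Rightarrow> 's \<Rightarrow> bool) \<Rightarrow> 's \<Rightarrow> 's \<Rightarrow> bool" where
  "ord_greenR mul le a b \<longleftrightarrow>
     down_cl le (insert a {mul a s | s. True}) = down_cl le (insert b {mul b s | s. True})"

definition greenR :: "('s \<Rightarrow> 's \<Rightarrow> 's) \<Rightarrow> 's \<Rightarrow> 's \<Rightarrow> bool" where
  "greenR mul a b \<longleftrightarrow> insert a {mul a s | s. True} = insert b {mul b s | s. True}"

end

theory Submission
  imports Defs
begin

text \<open>The natural order refines inclusion of principal right ideals: \<open>f \<le> g\<close> already
  requires \<open>f T\<^sub>X\<^sup>1 \<subseteq> g T\<^sub>X\<^sup>1\<close>. Hence every principal right ideal \<open>f T\<^sub>X\<^sup>1\<close> is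
  down-closed, the ordered ideal \<open>(f \<union> f T\<^sub>X]\<close> coincides with \<open>f T\<^sub>X\<^sup>1\<close>, and the two
  relations \<open>\<R>\<close> agree.\<close>

lemma tright_self: "f \<in> tright f"
  unfolding tright_def by simp

lemma tright_eq: "insert f {tmul f h | h. True} = tright f"
  unfolding tright_def by simp

lemma tright_subset_if_mem:
  assumes "g \<in> tright f"
  shows "tright g \<subseteq> tright f"
proof
  obtain h where h: "g = f \<or> g = h \<circ> f"
    using assms unfolding tright_def tmul_def by blast
  fix k assume "k \<in> tright g"
  then obtain h' where "k = g \<or> k = h' \<circ> g"
    unfolding tright_def tmul_def by blast
  with h show "k \<in> tright f"
    unfolding tright_def tmul_def by (auto intro: exI[of _ "h' \<circ> h"] simp: comp_assoc)
qed

lemma tnat_le_refl: "tnat_le f f"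
  unfolding tnat_le_def tmul_def by (auto intro: exI[of _ id])

lemma tnat_le_imp_tright_subset: "tnat_le f g \<Longrightarrow> tright f \<subseteq> tright g"
  unfolding tnat_le_def by blast

lemma down_cl_tright: "down_cl tnat_le (tright f) = tright f"
proof
  show "down_cl tnat_le (tright f) \<subseteq> tright f"
  proof
    fix k assume "k \<in> down_cl tnat_le (tright f)"
    then obtain g where g: "g \<in> tright f" "tnat_le k g"
      unfolding down_cl_def by blast
    have "k \<in> tright g"
      using tnat_le_imp_tright_subset[OF g(2)] tright_self by blast
    then show "k \<in> tright f"
      using tright_subset_if_mem[OF g(1)] by blast
  qed
  show "tright f \<subseteq> down_cl tnat_le (tright f)"
    unfolding down_cl_def using tnat_le_refl by blast
qed

theorem mainTheorem7:
  fixes f g :: "'a::finite \<Rightarrow> 'a"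
  shows "ord_greenR tmul tnat_le f g \<longleftrightarrow> greenR tmul f g"
  unfolding ord_greenR_def greenR_def tright_eq down_cl_tright ..

end
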